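(* Let $\mathcal M=(M,<,+,0,\ldots)$ be a definably complete locally o-minimal expansion of an ordered group. Let $(G,\tau)$ be a definable topological group which is definably simple, and which, as a definable topological space, is regular, Hausdorff and definably compact. Then $(G,\tau)$ is either discrete or definably connected in the topology $\tau$.
   Context: "Definable" means definable in $\mathcal M$ with parameters. $\mathcal M$ is an expansion of an ordered group $(M,<,+,0)$ whose order is dense without endpoints. It is locally o-minimal if for every definable $X\subseteq M$ and every $a\in M$ there is an open interval $I\ni a$ such that $X\cap I$ is a finite union of points and open intervals; it is definably complete if every definable subset of $M$ has a supremum and an infimum in $M\cup\{\pm\infty\}$. A family $\{S_t: t\in T\}$ of sets is definable if $T$ and $\bigcup_{t\in T}\{t\}\times S_t$ are definable. A definable topological space is a definable set $X$ with a topology admitting a definable family of sets as an open base. A family $\mathcal F$ of sets is filtered if for $B_1,B_2\in\mathcal F$ there is $B_3\in\mathcal F$ with $B_3\subseteq B_1\cap B_2$. A definable topological space is definably compact if every definable filtered family of nonempty closed subsets has nonempty intersection. A definable group is a group whose underlying set and multiplication are definable; a definable topological group is a definable group with a definable topology in which multiplication and inversion are continuous. It is definably simple if it has no nontrivial definable normal subgroup. A definable set is definably connected (in a definable topology) if it has no definable subset, other than the empty set and itself, that is both open and closed. *)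

theory Defs
  imports "HOL-Analysis.Analysis" "HOL-Algebra.Group" "HOL-Algebra.Coset"
begin

text \<open>M^n is represented by lists of length n over the type 'm.
  A first-order structure on M (in the sense of van den Dries) is a family S,
  S n being the definable (with parameters) subsets of M^n.\<close>

definition is_structure :: "(nat \<Rightarrow> 'm list set set) \<Rightarrow> bool" where
  "is_structure S \<longleftrightarrow>
    (\<forall>n. \<forall>A\<in>S n. \<forall>x\<in>A. length x = n) \<and>
    (\<forall>n. {} \<in> S n) \<and>
    (\<forall>n. \<forall>A\<in>S n. \<forall>B\<in>S n. A \<union> B \<in> S n) \<and>
    (\<forall>n. \<forall>A\<in>S n. {x. length x = n \<and> x \<notin> A} \<in> S n) \<and>
    (\<forall>n. \<forall>A\<in>S n. {x @ [a] | x a. x \<in> A} \<in> S (Suc n)) \<and>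
    (\<forall>n. \<forall>A\<in>S n. {a # x | x a. x \<in> A} \<in> S (Suc n)) \<and>
    (\<forall>n i j. i < n \<longrightarrow> j < n \<longrightarrow> {x. length x = n \<and> x ! i = x ! j} \<in> S n) \<and>
    (\<forall>n. \<forall>A\<in>S (Suc n). butlast ` A \<in> S n)"

definition expansion_of_ordered_group :: "(nat \<Rightarrow> ('m::{plus,ord}) list set set) \<Rightarrow> bool" where
  "expansion_of_ordered_group S \<longleftrightarrow> is_structure S \<and>
    (\<forall>a. {[a]} \<in> S 1) \<and>
    {[a, b] | a b. a < b} \<in> S 2 \<and>
    {[a, b, a + b] | a b. True} \<in> S 3"

definition unary :: "'m list set \<Rightarrow> 'm set" where
  "unary X = {a. [a] \<in> X}"

definition definably_complete :: "(nat \<Rightarrow> ('m::linorder) list set set) \<Rightarrow> bool" where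
  "definably_complete S \<longleftrightarrow> (\<forall>X\<in>S 1.
     (unary X \<noteq> {} \<and> bdd_above (unary X) \<longrightarrow>
        (\<exists>s. (\<forall>x\<in>unary X. x \<le> s) \<and> (\<forall>b. (\<forall>x\<in>unary X. x \<le> b) \<longrightarrow> s \<le> b))) \<and>
     (unary X \<noteq> {} \<and> bdd_below (unary X) \<longrightarrow>
        (\<exists>s. (\<forall>x\<in>unary X. s \<le> x) \<and> (\<forall>b. (\<forall>x\<in>unary X. b \<le> x) \<longrightarrow> b \<le> s))))"

definition finite_union_points_intervals :: "('m::linorder) set \<Rightarrow> bool" where
  "finite_union_points_intervals Y \<longleftrightarrow>
    (\<exists>P Q. finite P \<and> finite Q \<and> Y = P \<union> (\<Union>(a, b)\<in>Q. {a<..<b}))"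

definition locally_o_minimal :: "(nat \<Rightarrow> ('m::linorder) list set set) \<Rightarrow> bool" where
  "locally_o_minimal S \<longleftrightarrow> (\<forall>X\<in>S 1. \<forall>a. \<exists>l u. l < a \<and> a < u \<and>
     finite_union_points_intervals (unary X \<inter> {l<..<u}))"

definition definable_family ::
    "(nat \<Rightarrow> 'm list set set) \<Rightarrow> nat \<Rightarrow> nat \<Rightarrow> 'm list set \<Rightarrow> ('m list \<Rightarrow> 'm list set) \<Rightarrow> bool" where
  "definable_family S k n T F \<longleftrightarrow> T \<in> S k \<and> {t @ x | t x. t \<in> T \<and> x \<in> F t} \<in> S (k + n)"

definition definable_topology ::
    "(nat \<Rightarrow> 'm list set set) \<Rightarrow> nat \<Rightarrow> 'm list set \<Rightarrow> 'm list topology \<Rightarrow> bool" where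
  "definable_topology S n G \<tau> \<longleftrightarrow> G \<in> S n \<and> topspace \<tau> = G \<and>
    (\<exists>k T B. definable_family S k n T B \<and>
       (\<forall>t\<in>T. openin \<tau> (B t)) \<and>
       (\<forall>U. openin \<tau> U \<longrightarrow> (\<forall>x\<in>U. \<exists>t\<in>T. x \<in> B t \<and> B t \<subseteq> U)))"

definition definably_compact ::
    "(nat \<Rightarrow> 'm list set set) \<Rightarrow> nat \<Rightarrow> 'm list topology \<Rightarrow> bool" where
  "definably_compact S n \<tau> \<longleftrightarrow>
    (\<forall>k T C. definable_family S k n T C \<and>
       (\<forall>t\<in>T. closedin \<tau> (C t) \<and> C t \<noteq> {}) \<and>
       (\<forall>t1\<in>T. \<forall>t2\<in>T. \<exists>t3\<in>T. C t3 \<subseteq> C t1 \<inter> C t2)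
       \<longrightarrow> (\<Inter>t\<in>T. C t) \<noteq> {})"

definition definably_connected ::
    "(nat \<Rightarrow> 'm list set set) \<Rightarrow> nat \<Rightarrow> 'm list topology \<Rightarrow> bool" where
  "definably_connected S n \<tau> \<longleftrightarrow>
    (\<forall>A. A \<in> S n \<and> A \<subseteq> topspace \<tau> \<and> openin \<tau> A \<and> closedin \<tau> A
       \<longrightarrow> A = {} \<or> A = topspace \<tau>)"

abbreviation grp :: "'m list set \<Rightarrow> ('m list \<Rightarrow> 'm list \<Rightarrow> 'm list) \<Rightarrow> 'm list \<Rightarrow> 'm list monoid" where
  "grp G mul e \<equiv> \<lparr>carrier = G, monoid.mult = mul, one = e\<rparr>"

definition definable_group ::
    "(nat \<Rightarrow> 'm list set set) \<Rightarrow> nat \<Rightarrow> 'm list set \<Rightarrow> ('m list \<Rightarrow> 'm list \<Rightarrow> 'm list) \<Rightarrow> 'm list \<Rightarrow> bool" where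
  "definable_group S n G mul e \<longleftrightarrow> group (grp G mul e) \<and> G \<in> S n \<and>
     {x @ y @ mul x y | x y. x \<in> G \<and> y \<in> G} \<in> S (n + n + n)"

definition definable_topological_group ::
    "(nat \<Rightarrow> 'm list set set) \<Rightarrow> nat \<Rightarrow> 'm list set \<Rightarrow> ('m list \<Rightarrow> 'm list \<Rightarrow> 'm list) \<Rightarrow> 'm list
      \<Rightarrow> 'm list topology \<Rightarrow> bool" where
  "definable_topological_group S n G mul e \<tau> \<longleftrightarrow>
     definable_group S n G mul e \<and> definable_topology S n G \<tau> \<and>
     continuous_map (prod_topology \<tau> \<tau>) \<tau> (\<lambda>(x, y). mul x y) \<and>
     continuous_map \<tau> \<tau> (\<lambda>x. inv\<^bsub>grp G mul e\<^esub> x)"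

definition definably_simple ::
    "(nat \<Rightarrow> 'm list set set) \<Rightarrow> nat \<Rightarrow> 'm list set \<Rightarrow> ('m list \<Rightarrow> 'm list \<Rightarrow> 'm list) \<Rightarrow> 'm list \<Rightarrow> bool" where
  "definably_simple S n G mul e \<longleftrightarrow>
     (\<forall>H. H \<in> S n \<and> normal H (grp G mul e) \<longrightarrow> H = {e} \<or> H = G)"

end

theory Submission
  imports Defs
begin

text \<open>
  Suppose \<open>A\<close> is a definable clopen subset of \<open>G\<close> with \<open>{} \<noteq> A \<noteq> G\<close>. Its stabiliser
  \<open>H = {h. h A = A}\<close> is a definable proper subgroup. Because \<open>A\<close> is clopen, the pairs \<open>(h, u)\<close>
  with \<open>h u \<in> A \<longleftrightarrow> u \<in> A\<close> form an open definable set containing \<open>{e} \<times> G\<close>, and a definable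
  tube lemma, obtained by applying definable compactness to a filtered family of closures
  indexed by the definable basis, yields a neighbourhood \<open>V\<close> of \<open>e\<close> with \<open>V \<times> G\<close> inside that
  set; so \<open>V \<subseteq> H\<close> and \<open>H\<close> is open. The same argument applied to conjugation shows that
  the normal core \<open>\<Inter>g. g H g\<inverse>\<close> of \<open>H\<close>, a definable normal subgroup contained in \<open>H\<close>, is
  open. Definable simplicity forces the core to be \<open>{e}\<close>, so \<open>{e}\<close> is open and \<open>G\<close> is discrete.
\<close>

section \<open>Definable predicates\<close>

locale first_order_structure =
  fixes S :: "nat \<Rightarrow> 'm list set set"
  assumes is_structure: "is_structure S"
begin

lemma structure_length: "A \<in> S n \<Longrightarrow> x \<in> A \<Longrightarrow> length x = n"
  using is_structure unfolding is_structure_def by (elim conjE) blast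

lemma structure_empty: "{} \<in> S n"
  using is_structure unfolding is_structure_def by simp

lemma structure_Un: "A \<in> S n \<Longrightarrow> B \<in> S n \<Longrightarrow> A \<union> B \<in> S n"
  using is_structure unfolding is_structure_def by simp

lemma structure_compl: "A \<in> S n \<Longrightarrow> {x. length x = n \<and> x \<notin> A} \<in> S n"
  using is_structure unfolding is_structure_def by simp

lemma structure_Cons: "A \<in> S n \<Longrightarrow> {a # x | x a. x \<in> A} \<in> S (Suc n)"
  using is_structure unfolding is_structure_def by simp

lemma structure_diagonal: "i < n \<Longrightarrow> j < n \<Longrightarrow> {x. length x = n \<and> x ! i = x ! j} \<in> S n"
  using is_structure unfolding is_structure_def by simp

lemma structure_butlast: "A \<in> S (Suc n) \<Longrightarrow> butlast ` A \<in> S n"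
  using is_structure unfolding is_structure_def by simp

end

definition definable_pred :: "(nat \<Rightarrow> 'm list set set) \<Rightarrow> nat \<Rightarrow> ('m list \<Rightarrow> bool) \<Rightarrow> bool" where
  "definable_pred S m P \<longleftrightarrow> {x. length x = m \<and> P x} \<in> S m"

lemma definable_predI: "X \<in> S m \<Longrightarrow> X = {x. length x = m \<and> P x} \<Longrightarrow> definable_pred S m P"
  by (simp add: definable_pred_def)

lemma definable_pred_memD:
  assumes "definable_pred S m (\<lambda>x. x \<in> A)" "\<forall>x\<in>A. length x = m"
  shows "A \<in> S m"
proof -
  have "{x. length x = m \<and> x \<in> A} = A" using assms(2) by blast
  then show ?thesis using assms(1) unfolding definable_pred_def by simp
qed

lemma definable_pred_cong:
  assumes "definable_pred S m P" "\<And>x. length x = m \<Longrightarrow> P x \<longleftrightarrow> Q x"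
  shows "definable_pred S m Q"
proof -
  have "{x. length x = m \<and> P x} = {x. length x = m \<and> Q x}" using assms(2) by blast
  then show ?thesis using assms(1) unfolding definable_pred_def by simp
qed

context first_order_structure
begin

lemma definable_pred_mem:
  assumes "A \<in> S m" shows "definable_pred S m (\<lambda>x. x \<in> A)"
  using assms by (rule definable_predI) (auto dest: structure_length[OF assms])

lemma definable_pred_not:
  assumes "definable_pred S m P" shows "definable_pred S m (\<lambda>x. \<not> P x)"
  using structure_compl[OF assms[unfolded definable_pred_def]] by (rule definable_predI) auto

lemma definable_pred_or:
  assumes "definable_pred S m P" "definable_pred S m Q" shows "definable_pred S m (\<lambda>x. P x \<or> Q x)"
  using structure_Un[OF assms[unfolded definable_pred_def]] by (rule definable_predI) auto

lemma definable_pred_and: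
  "definable_pred S m P \<Longrightarrow> definable_pred S m Q \<Longrightarrow> definable_pred S m (\<lambda>x. P x \<and> Q x)"
  using definable_pred_not[OF definable_pred_or[OF definable_pred_not definable_pred_not]] by simp

lemma definable_pred_True: "definable_pred S m (\<lambda>x. True)"
  using definable_pred_not[of m "\<lambda>x. False"] structure_empty by (simp add: definable_pred_def)

lemma definable_pred_nth_eq: "i < m \<Longrightarrow> j < m \<Longrightarrow> definable_pred S m (\<lambda>x. x ! i = x ! j)"
  unfolding definable_pred_def by (rule structure_diagonal)

lemma definable_pred_all_less:
  fixes N :: nat shows "(\<And>i. i < N \<Longrightarrow> definable_pred S m (R i)) \<Longrightarrow> definable_pred S m (\<lambda>x. \<forall>i<N. R i x)"
proof (induction N)
  case 0
  then show ?case using definable_pred_True by simp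
next
  case (Suc N)
  then have "definable_pred S m (\<lambda>x. (\<forall>i<N. R i x) \<and> R N x)" by (simp add: definable_pred_and)
  then show ?case by (rule definable_pred_cong) (auto simp: less_Suc_eq)
qed

lemma definable_pred_ex_last:
  assumes "definable_pred S (Suc m) P"
  shows "definable_pred S m (\<lambda>x. \<exists>a. P (x @ [a]))"
proof -
  have image_eq: "butlast ` {x. length x = Suc m \<and> P x} = {x. length x = m \<and> (\<exists>a. P (x @ [a]))}"
  proof (intro equalityI subsetI)
    fix x assume "x \<in> butlast ` {x. length x = Suc m \<and> P x}"
    then obtain y where "length y = Suc m" "P y" "x = butlast y" by blast
    then show "x \<in> {x. length x = m \<and> (\<exists>a. P (x @ [a]))}"
      by (auto simp: length_Suc_conv_rev)
  next
    fix x assume "x \<in> {x. length x = m \<and> (\<exists>a. P (x @ [a]))}"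
    then obtain a where "length x = m" "P (x @ [a])" by blast
    then show "x \<in> butlast ` {x. length x = Suc m \<and> P x}"
      by (intro image_eqI[of _ _ "x @ [a]"]) auto
  qed
  with structure_butlast[OF assms[unfolded definable_pred_def]] show ?thesis
    by (rule definable_predI)
qed

lemma definable_pred_ex_block:
  "definable_pred S (m + l) P \<Longrightarrow> definable_pred S m (\<lambda>x. \<exists>y. length y = l \<and> P (x @ y))"
proof (induction l arbitrary: P)
  case 0
  then have "definable_pred S m P" by simp
  then show ?case by (rule definable_pred_cong) auto
next
  case (Suc l)
  have "definable_pred S (m + l) (\<lambda>z. \<exists>a. P (z @ [a]))"
    using definable_pred_ex_last Suc.prems by simp
  then have "definable_pred S m (\<lambda>x. \<exists>y. length y = l \<and> (\<exists>a. P ((x @ y) @ [a])))"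
    by (rule Suc.IH)
  then show ?case
    by (rule definable_pred_cong) (auto simp: length_Suc_conv_rev)
qed

lemma definable_pred_Cons:
  assumes "definable_pred S m P" shows "definable_pred S (Suc m) (\<lambda>x. P (tl x))"
  using structure_Cons[OF assms[unfolded definable_pred_def]] by (rule definable_predI) (auto simp: length_Suc_conv)

lemma definable_pred_drop: "definable_pred S l P \<Longrightarrow> definable_pred S (m + l) (\<lambda>x. P (drop m x))"
proof (induction m)
  case (Suc m)
  then show ?case using definable_pred_Cons[OF Suc.IH] by (simp add: drop_Suc)
qed simp

lemma definable_pred_reindex:
  assumes "definable_pred S a P" "length ids = a" "\<forall>i\<in>set ids. i < m"
  shows "definable_pred S m (\<lambda>x. P (map (nth x) ids))"
proof -
  have "definable_pred S (m + a) (\<lambda>z. P (drop m z) \<and> (\<forall>i<a. z ! (m + i) = z ! (ids ! i)))"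
    using assms by (intro definable_pred_and definable_pred_drop definable_pred_all_less definable_pred_nth_eq)
      (auto simp: trans_less_add1)
  then have "definable_pred S m
      (\<lambda>x. \<exists>y. length y = a \<and> P (drop m (x @ y)) \<and> (\<forall>i<a. (x @ y) ! (m + i) = (x @ y) ! (ids ! i)))"
    by (rule definable_pred_ex_block)
  then show ?thesis
  proof (rule definable_pred_cong)
    fix x :: "'m list" assume x: "length x = m"
    show "(\<exists>y. length y = a \<and> P (drop m (x @ y)) \<and> (\<forall>i<a. (x @ y) ! (m + i) = (x @ y) ! (ids ! i)))
        \<longleftrightarrow> P (map (nth x) ids)"
    proof
      assume "\<exists>y. length y = a \<and> P (drop m (x @ y)) \<and> (\<forall>i<a. (x @ y) ! (m + i) = (x @ y) ! (ids ! i))"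
      then obtain y where y: "length y = a" "P (drop m (x @ y))"
        "\<forall>i<a. (x @ y) ! (m + i) = (x @ y) ! (ids ! i)" by blast
      have "y = map (nth x) ids"
        using y(1,3) assms(2,3) x by (intro nth_equalityI) (auto simp: nth_append)
      then show "P (map (nth x) ids)" using y(2) x by simp
    next
      assume "P (map (nth x) ids)"
      then show "\<exists>y. length y = a \<and> P (drop m (x @ y)) \<and> (\<forall>i<a. (x @ y) ! (m + i) = (x @ y) ! (ids ! i))"
        using assms(2,3) x by (intro exI[of _ "map (nth x) ids"]) (auto simp: nth_append)
    qed
  qed
qed

end

section \<open>Definable relations between tuples\<close>

fun blocks :: "nat list \<Rightarrow> 'a list \<Rightarrow> 'a list list" where
  "blocks [] z = []"
| "blocks (l # ls) z = take l z # blocks ls (drop l z)"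

lemma length_blocks [simp]: "length (blocks ls z) = length ls"
  by (induction ls arbitrary: z) auto

lemma map_length_blocks: "length z = sum_list ls \<Longrightarrow> map length (blocks ls z) = ls"
  by (induction ls arbitrary: z) auto

lemma concat_blocks: "length z = sum_list ls \<Longrightarrow> concat (blocks ls z) = z"
  by (induction ls arbitrary: z) auto

lemma blocks_concat: "map length xs = ls \<Longrightarrow> blocks ls (concat xs) = xs"
  by (induction xs arbitrary: ls) auto

lemma blocks_append:
  "length x = sum_list ls \<Longrightarrow> blocks (ls @ ls') (x @ y) = blocks ls x @ blocks ls' y"
  by (induction ls arbitrary: x) auto

lemma nth_blocks:
  "j < length ls \<Longrightarrow> blocks ls z ! j = take (ls ! j) (drop (sum_list (take j ls)) z)"
  by (induction ls arbitrary: z j) (auto simp: nth_Cons' drop_drop take_Cons' add.commute)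

lemma map_nth_upt: "p + q \<le> length z \<Longrightarrow> map (nth z) [p..<p + q] = take q (drop p z)"
  by (rule nth_equalityI) auto

lemma sum_list_take_nth_le:
  assumes "j < length ls" shows "sum_list (take j ls) + ls ! j \<le> sum_list (ls :: nat list)"
proof -
  have "sum_list (take j ls) + ls ! j = sum_list (take (Suc j) ls)"
    using assms by (simp add: take_Suc_conv_app_nth)
  also have "\<dots> \<le> sum_list (take (Suc j) ls) + sum_list (drop (Suc j) ls)" by simp
  also have "\<dots> = sum_list ls" by (simp flip: sum_list_append)
  finally show ?thesis .
qed

text \<open>
  Formulas below name their tuple variables
  \<open>xs ! 0, xs ! 1, \<dots>\<close>; quantifiers bind the last variable.
\<close>

definition definable_rel :: "(nat \<Rightarrow> 'm list set set) \<Rightarrow> nat list \<Rightarrow> ('m list list \<Rightarrow> bool) \<Rightarrow> bool" where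
  "definable_rel S ls P \<longleftrightarrow> definable_pred S (sum_list ls) (\<lambda>z. P (blocks ls z))"

lemma definable_rel_cong:
  assumes "definable_rel S ls P"
    and "\<And>xs. length xs = length ls \<Longrightarrow> map length xs = ls \<Longrightarrow> P xs \<longleftrightarrow> Q xs"
  shows "definable_rel S ls Q"
  using assms(1) unfolding definable_rel_def
  by (rule definable_pred_cong) (simp add: assms(2) map_length_blocks)

context first_order_structure
begin

lemma definable_rel_not: "definable_rel S ls P \<Longrightarrow> definable_rel S ls (\<lambda>xs. \<not> P xs)"
  unfolding definable_rel_def by (rule definable_pred_not)

lemma definable_rel_and:
  "definable_rel S ls P \<Longrightarrow> definable_rel S ls Q \<Longrightarrow> definable_rel S ls (\<lambda>xs. P xs \<and> Q xs)"
  unfolding definable_rel_def by (rule definable_pred_and)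

lemma definable_rel_imp:
  "definable_rel S ls P \<Longrightarrow> definable_rel S ls Q \<Longrightarrow> definable_rel S ls (\<lambda>xs. P xs \<longrightarrow> Q xs)"
  unfolding definable_rel_def imp_conv_disj by (intro definable_pred_or definable_pred_not)

lemma definable_rel_iff:
  "definable_rel S ls P \<Longrightarrow> definable_rel S ls Q \<Longrightarrow> definable_rel S ls (\<lambda>xs. P xs \<longleftrightarrow> Q xs)"
  unfolding iff_conv_conj_imp by (intro definable_rel_and definable_rel_imp)

lemma definable_rel_ex:
  assumes "definable_rel S (ls @ [l]) P"
  shows "definable_rel S ls (\<lambda>xs. \<exists>y. length y = l \<and> P (xs @ [y]))"
proof -
  have "definable_pred S (sum_list ls) (\<lambda>x. \<exists>y. length y = l \<and> P (blocks (ls @ [l]) (x @ y)))"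
    using assms unfolding definable_rel_def by (intro definable_pred_ex_block) simp
  then show ?thesis
    unfolding definable_rel_def by (rule definable_pred_cong) (simp add: blocks_append cong: conj_cong)
qed

lemma definable_rel_all:
  assumes "definable_rel S (ls @ [l]) P"
  shows "definable_rel S ls (\<lambda>xs. \<forall>y. length y = l \<longrightarrow> P (xs @ [y]))"
  using definable_rel_not[OF definable_rel_ex[OF definable_rel_not[OF assms]]]
  by (rule definable_rel_cong) simp

lemma definable_rel_exI:
  assumes "definable_rel S ls' P" "ls' = ls @ [l]"
    and "\<And>xs. length xs = length ls \<Longrightarrow> map length xs = ls \<Longrightarrow>
      (\<exists>y. length y = l \<and> P (xs @ [y])) \<longleftrightarrow> Q xs"
  shows "definable_rel S ls Q"
  using definable_rel_ex[OF assms(1)[unfolded assms(2)]] by (rule definable_rel_cong) (rule assms(3))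

lemma definable_rel_allI:
  assumes "definable_rel S ls' P" "ls' = ls @ [l]"
    and "\<And>xs. length xs = length ls \<Longrightarrow> map length xs = ls \<Longrightarrow>
      (\<forall>y. length y = l \<longrightarrow> P (xs @ [y])) \<longleftrightarrow> Q xs"
  shows "definable_rel S ls Q"
  using definable_rel_all[OF assms(1)[unfolded assms(2)]] by (rule definable_rel_cong) (rule assms(3))

lemma definable_rel_reindex:
  assumes "definable_rel S ls P" "\<forall>j\<in>set f. j < length ls'" "map (nth ls') f = ls"
  shows "definable_rel S ls' (\<lambda>xs. P (map (nth xs) f))"
proof -
  define off where "off j = sum_list (take j ls')" for j
  define ids where "ids = concat (map (\<lambda>j. [off j..<off j + ls' ! j]) f)"
  have "length ids = sum_list ls"
    unfolding ids_def assms(3)[symmetric] by (simp add: length_concat comp_def)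
  moreover have "\<forall>i\<in>set ids. i < sum_list ls'"
  proof
    fix i assume "i \<in> set ids"
    then obtain j where "j \<in> set f" "i < off j + ls' ! j" by (auto simp: ids_def)
    then show "i < sum_list ls'"
      using assms(2) sum_list_take_nth_le[of j ls'] unfolding off_def by simp
  qed
  ultimately have "definable_pred S (sum_list ls') (\<lambda>z. P (blocks ls (map (nth z) ids)))"
    using assms(1) unfolding definable_rel_def by (rule definable_pred_reindex[rotated])
  then show ?thesis
    unfolding definable_rel_def
  proof (rule definable_pred_cong)
    fix z :: "'m list" assume z: "length z = sum_list ls'"
    have "map (nth z) ids = concat (map (\<lambda>j. map (nth z) [off j..<off j + ls' ! j]) f)"
      by (simp add: ids_def map_concat comp_def)
    also have "\<dots> = concat (map (nth (blocks ls' z)) f)"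
    proof (intro arg_cong[where f = concat] map_cong refl)
      fix j assume "j \<in> set f"
      then have "j < length ls'" using assms(2) by blast
      then show "map (nth z) [off j..<off j + ls' ! j] = blocks ls' z ! j"
        using sum_list_take_nth_le z by (simp add: off_def nth_blocks map_nth_upt)
    qed
    moreover have "map length (map (nth (blocks ls' z)) f) = ls"
    proof -
      have "length (blocks ls' z ! j) = ls' ! j" if "j \<in> set f" for j
        using assms(2) that nth_map[of j "blocks ls' z" length] map_length_blocks[OF z] by simp
      then show ?thesis unfolding assms(3)[symmetric] by (auto intro: map_cong)
    qed
    ultimately show "P (blocks ls (map (nth z) ids)) \<longleftrightarrow> P (map (nth (blocks ls' z)) f)"
      by (simp add: blocks_concat)
  qed
qed

lemma definable_rel_concat_mem:
  assumes "A \<in> S (sum_list ls)" shows "definable_rel S ls (\<lambda>xs. concat xs \<in> A)"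
  using definable_pred_mem[OF assms] unfolding definable_rel_def
  by (rule definable_pred_cong) (simp add: concat_blocks)

lemma definable_rel_mem:
  assumes "A \<in> S l" "i < length ls" "ls ! i = l"
  shows "definable_rel S ls (\<lambda>xs. xs ! i \<in> A)"
proof -
  have "definable_rel S [l] (\<lambda>xs. concat xs \<in> A)"
    using definable_rel_concat_mem[of A "[l]"] assms(1) by simp
  then have "definable_rel S [l] (\<lambda>xs. xs ! 0 \<in> A)"
    by (rule definable_rel_cong) (auto simp: length_Suc_conv)
  from definable_rel_reindex[OF this, where f = "[i]" and ls' = ls] show ?thesis
    using assms(2,3) by simp
qed

lemma definable_rel_memD:
  assumes "definable_rel S [l] (\<lambda>xs. xs ! 0 \<in> A)" "\<forall>x\<in>A. length x = l"
  shows "A \<in> S l"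
proof -
  have "definable_pred S l (\<lambda>z. take l z \<in> A)"
    using assms(1) by (simp add: definable_rel_def)
  then have "definable_pred S l (\<lambda>x. x \<in> A)"
    by (rule definable_pred_cong) simp
  then show ?thesis using assms(2) by (rule definable_pred_memD)
qed

lemma definable_familyD:
  assumes "definable_family S k n T F"
  shows "definable_rel S [k, n] (\<lambda>xs. xs ! 0 \<in> T \<and> xs ! 1 \<in> F (xs ! 0))"
proof -
  have T: "T \<in> S k" and TF: "{t @ x | t x. t \<in> T \<and> x \<in> F t} \<in> S (k + n)"
    using assms unfolding definable_family_def by auto
  have "definable_rel S [k, n] (\<lambda>xs. concat xs \<in> {t @ x | t x. t \<in> T \<and> x \<in> F t})"
    by (rule definable_rel_concat_mem) (use TF in simp)
  then show ?thesis
  proof (rule definable_rel_cong)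
    fix xs :: "'m list list" assume "map length xs = [k, n]"
    then obtain t x where xs: "xs = [t, x]" and t: "length t = k"
      by (cases xs; cases "tl xs") auto
    have "t @ x \<in> {t @ x | t x. t \<in> T \<and> x \<in> F t} \<longleftrightarrow> t \<in> T \<and> x \<in> F t"
    proof
      assume "t @ x \<in> {t @ x | t x. t \<in> T \<and> x \<in> F t}"
      then obtain t' x' where tx: "t @ x = t' @ x'" "t' \<in> T" "x' \<in> F t'" by blast
      then have "length t = length t'" using structure_length[OF T] t by simp
      then have "t = t' \<and> x = x'" using tx(1) append_eq_append_conv by blast
      then show "t \<in> T \<and> x \<in> F t" using tx by simp
    qed blast
    then show "concat xs \<in> {t @ x | t x. t \<in> T \<and> x \<in> F t} \<longleftrightarrow> xs ! 0 \<in> T \<and> xs ! 1 \<in> F (xs ! 0)"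
      using xs by simp
  qed
qed

lemma definable_family_length:
  assumes "definable_family S k n T F" "t \<in> T" "x \<in> F t"
  shows "length x = n"
proof -
  have "t @ x \<in> {t @ x | t x. t \<in> T \<and> x \<in> F t}" using assms(2,3) by blast
  then have "length (t @ x) = k + n" "length t = k"
    using assms(1,2) structure_length unfolding definable_family_def by blast+
  then show ?thesis by simp
qed

lemma definable_familyI:
  assumes "T \<in> S k" "definable_rel S [k, n] (\<lambda>xs. xs ! 0 \<in> T \<and> xs ! 1 \<in> F (xs ! 0))"
    and "\<forall>t\<in>T. \<forall>x\<in>F t. length x = n"
  shows "definable_family S k n T F"
proof -
  have "definable_pred S (k + n) (\<lambda>z. take k z \<in> T \<and> take n (drop k z) \<in> F (take k z))"
    using assms(2) by (simp add: definable_rel_def)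
  then have "definable_pred S (k + n) (\<lambda>z. z \<in> {t @ x | t x. t \<in> T \<and> x \<in> F t})"
  proof (rule definable_pred_cong)
    fix z :: "'m list" assume z: "length z = k + n"
    show "(take k z \<in> T \<and> take n (drop k z) \<in> F (take k z))
        \<longleftrightarrow> z \<in> {t @ x | t x. t \<in> T \<and> x \<in> F t}"
    proof
      assume "take k z \<in> T \<and> take n (drop k z) \<in> F (take k z)"
      then show "z \<in> {t @ x | t x. t \<in> T \<and> x \<in> F t}"
        using z by (intro CollectI exI[of _ "take k z"] exI[of _ "drop k z"]) simp
    next
      assume "z \<in> {t @ x | t x. t \<in> T \<and> x \<in> F t}"
      then obtain t x where "z = t @ x" "t \<in> T" "x \<in> F t" by blast
      then show "take k z \<in> T \<and> take n (drop k z) \<in> F (take k z)"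
        using structure_length[OF assms(1)] assms(3) by simp
    qed
  qed
  moreover have "\<forall>z\<in>{t @ x | t x. t \<in> T \<and> x \<in> F t}. length z = k + n"
    using structure_length[OF assms(1)] assms(3) by auto
  ultimately show ?thesis
    using assms(1) unfolding definable_family_def by (blast intro: definable_pred_memD)
qed

lemma definable_Collect_Ball:
  assumes "definable_rel S [n, n] (\<lambda>xs. Q (xs ! 0) (xs ! 1))" "G \<in> S n"
  shows "{x \<in> G. \<forall>y\<in>G. Q x y} \<in> S n"
proof (rule definable_rel_memD)
  have "definable_rel S [n, n] (\<lambda>xs. xs ! 1 \<in> G \<longrightarrow> Q (xs ! 0) (xs ! 1))"
    using assms by (intro definable_rel_imp definable_rel_mem) auto
  then have "definable_rel S [n] (\<lambda>xs. \<forall>y. length y = n \<longrightarrow> y \<in> G \<longrightarrow> Q (xs ! 0) y)"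
    by (rule definable_rel_allI[where l = n]) (simp_all add: nth_append)
  then have "definable_rel S [n] (\<lambda>xs. xs ! 0 \<in> G \<and> (\<forall>y. length y = n \<longrightarrow> y \<in> G \<longrightarrow> Q (xs ! 0) y))"
    using assms(2) by (intro definable_rel_and definable_rel_mem) auto
  then show "definable_rel S [n] (\<lambda>xs. xs ! 0 \<in> {x \<in> G. \<forall>y\<in>G. Q x y})"
    by (rule definable_rel_cong) (auto dest: structure_length[OF assms(2)])
  show "\<forall>x\<in>{x \<in> G. \<forall>y\<in>G. Q x y}. length x = n"
    using structure_length[OF assms(2)] by blast
qed

lemma definable_rel_apply_op:
  assumes graph: "definable_rel S [n, n, n] (\<lambda>xs. xs ! 0 \<in> G \<and> xs ! 1 \<in> G \<and> xs ! 2 = f (xs ! 0) (xs ! 1))"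
    and length_f: "\<And>x y. x \<in> G \<Longrightarrow> y \<in> G \<Longrightarrow> length (f x y) = n"
    and R: "definable_rel S [n, n, n] R"
  shows "definable_rel S [n, n] (\<lambda>xs. xs ! 0 \<in> G \<and> xs ! 1 \<in> G \<and> R [xs ! 0, xs ! 1, f (xs ! 0) (xs ! 1)])"
  using definable_rel_and[OF graph R]
  by (rule definable_rel_exI[where l = n]) (auto simp: length_Suc_conv numeral_2_eq_2 length_f)

end

section \<open>Definable topologies and the tube lemma\<close>

lemma in_closure_of_basis:
  assumes "\<forall>t\<in>T. openin X (B t)" "\<forall>U. openin X U \<longrightarrow> (\<forall>x\<in>U. \<exists>t\<in>T. x \<in> B t \<and> B t \<subseteq> U)"
  shows "x \<in> X closure_of Y \<longleftrightarrow> x \<in> topspace X \<and> (\<forall>t\<in>T. x \<in> B t \<longrightarrow> (\<exists>y\<in>B t. y \<in> Y))"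
proof -
  have "(\<forall>U. x \<in> U \<and> openin X U \<longrightarrow> (\<exists>y. y \<in> Y \<and> y \<in> U)) \<longleftrightarrow>
      (\<forall>t\<in>T. x \<in> B t \<longrightarrow> (\<exists>y\<in>B t. y \<in> Y))"
  proof
    assume "\<forall>U. x \<in> U \<and> openin X U \<longrightarrow> (\<exists>y. y \<in> Y \<and> y \<in> U)"
    then show "\<forall>t\<in>T. x \<in> B t \<longrightarrow> (\<exists>y\<in>B t. y \<in> Y)"
      using assms(1) by blast
  next
    assume Y: "\<forall>t\<in>T. x \<in> B t \<longrightarrow> (\<exists>y\<in>B t. y \<in> Y)"
    show "\<forall>U. x \<in> U \<and> openin X U \<longrightarrow> (\<exists>y. y \<in> Y \<and> y \<in> U)"
    proof (intro allI impI)
      fix U assume "x \<in> U \<and> openin X U"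
      then obtain t where "t \<in> T" "x \<in> B t" "B t \<subseteq> U" using assms(2) by blast
      then show "\<exists>y. y \<in> Y \<and> y \<in> U" using Y by blast
    qed
  qed
  then show ?thesis unfolding in_closure_of by (intro conj_cong refl)
qed

lemma openin_eq_clopen_preimage:
  assumes f: "continuous_map X Y f" and g: "continuous_map X Y g"
    and A: "openin Y A" "closedin Y A"
  shows "openin X {x \<in> topspace X. f x \<in> A \<longleftrightarrow> g x \<in> A}"
proof -
  let ?F = "{x \<in> topspace X. f x \<in> A}" and ?G = "{x \<in> topspace X. g x \<in> A}"
  have "openin X ?F" "closedin X ?F" "openin X ?G" "closedin X ?G"
    using openin_continuous_map_preimage closedin_continuous_map_preimage f g A by blast+
  then have "openin X ((?F \<inter> ?G) \<union> ((topspace X - ?F) \<inter> (topspace X - ?G)))"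
    by (intro openin_Un openin_Int openin_diff openin_topspace)
  moreover have "(?F \<inter> ?G) \<union> ((topspace X - ?F) \<inter> (topspace X - ?G)) = {x \<in> topspace X. f x \<in> A \<longleftrightarrow> g x \<in> A}"
    by blast
  ultimately show ?thesis by simp
qed

locale definable_topological_space = first_order_structure S
  for S :: "nat \<Rightarrow> 'm list set set" +
  fixes n :: nat and \<tau> :: "'m list topology"
  assumes definable_topology: "definable_topology S n (topspace \<tau>) \<tau>"
begin

lemma topspace_definable: "topspace \<tau> \<in> S n"
  using definable_topology unfolding definable_topology_def by blast

lemma length_topspace: "x \<in> topspace \<tau> \<Longrightarrow> length x = n"
  using structure_length[OF topspace_definable] .

lemma definable_basis:
  obtains k T B where "definable_family S k n T B" "\<forall>t\<in>T. openin \<tau> (B t)"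
    "\<forall>U. openin \<tau> U \<longrightarrow> (\<forall>x\<in>U. \<exists>t\<in>T. x \<in> B t \<and> B t \<subseteq> U)"
  using definable_topology unfolding definable_topology_def by blast

lemma definable_family_closure_of:
  assumes D: "definable_family S k' n T' D"
  shows "definable_family S k' n T' (\<lambda>t. \<tau> closure_of D t)"
proof -
  obtain k T B where B: "definable_family S k n T B" and
    open_B: "\<forall>t\<in>T. openin \<tau> (B t)" and
    basis: "\<forall>U. openin \<tau> U \<longrightarrow> (\<forall>x\<in>U. \<exists>t\<in>T. x \<in> B t \<and> B t \<subseteq> U)"
    by (rule definable_basis)
  have T': "T' \<in> S k'" and T: "T \<in> S k"
    using D B unfolding definable_family_def by auto
  let ?ls = "[k', n, k, n]"
  have "definable_rel S ?ls
      (\<lambda>xs. (xs ! 2 \<in> T \<and> xs ! 3 \<in> B (xs ! 2)) \<and> (xs ! 0 \<in> T' \<and> xs ! 3 \<in> D (xs ! 0)))"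
    using definable_rel_reindex[OF definable_familyD[OF B], where f = "[2, 3]" and ls' = ?ls]
      definable_rel_reindex[OF definable_familyD[OF D], where f = "[0, 3]" and ls' = ?ls]
    by (rule_tac definable_rel_and) simp_all
  then have "definable_rel S [k', n, k]
      (\<lambda>xs. \<exists>y. length y = n \<and> (xs ! 2 \<in> T \<and> y \<in> B (xs ! 2)) \<and> (xs ! 0 \<in> T' \<and> y \<in> D (xs ! 0)))"
    by (rule definable_rel_exI[where l = n]) (simp_all add: nth_append)
  then have "definable_rel S [k', n, k]
      (\<lambda>xs. (xs ! 2 \<in> T \<and> xs ! 1 \<in> B (xs ! 2)) \<longrightarrow>
        (\<exists>y. length y = n \<and> (xs ! 2 \<in> T \<and> y \<in> B (xs ! 2)) \<and> (xs ! 0 \<in> T' \<and> y \<in> D (xs ! 0))))"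
    using definable_rel_reindex[OF definable_familyD[OF B], where f = "[2, 1]" and ls' = "[k', n, k]"]
    by (rule_tac definable_rel_imp) simp_all
  then have "definable_rel S [k', n]
      (\<lambda>xs. \<forall>s. length s = k \<longrightarrow> (s \<in> T \<and> xs ! 1 \<in> B s) \<longrightarrow>
        (\<exists>y. length y = n \<and> (s \<in> T \<and> y \<in> B s) \<and> (xs ! 0 \<in> T' \<and> y \<in> D (xs ! 0))))"
    by (rule definable_rel_allI[where l = k]) (simp_all add: nth_append)
  then have "definable_rel S [k', n]
      (\<lambda>xs. xs ! 0 \<in> T' \<and> xs ! 1 \<in> topspace \<tau> \<and> (\<forall>s. length s = k \<longrightarrow> (s \<in> T \<and> xs ! 1 \<in> B s) \<longrightarrow>
        (\<exists>y. length y = n \<and> (s \<in> T \<and> y \<in> B s) \<and> (xs ! 0 \<in> T' \<and> y \<in> D (xs ! 0)))))"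
    using T' topspace_definable
    by (intro definable_rel_and definable_rel_mem) simp_all
  then have "definable_rel S [k', n] (\<lambda>xs. xs ! 0 \<in> T' \<and> xs ! 1 \<in> \<tau> closure_of D (xs ! 0))"
    by (rule definable_rel_cong)
      (auto simp: in_closure_of_basis[OF open_B basis] dest: structure_length[OF T];
        metis definable_family_length[OF B])
  moreover have "\<forall>t\<in>T'. \<forall>x\<in>\<tau> closure_of D t. length x = n"
  proof (intro ballI)
    fix t x assume "x \<in> \<tau> closure_of D t"
    then show "length x = n" using closure_of_subset_topspace length_topspace by (metis subsetD)
  qed
  ultimately show ?thesis by (rule definable_familyI[OF T', where F = "\<lambda>t. \<tau> closure_of D t"])
qed

lemma definable_family_tube_complement:
  assumes B: "definable_family S k n T B" and p: "{p} \<in> S n"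
    and \<Omega>: "definable_rel S [n, n] (\<lambda>xs. (xs ! 0, xs ! 1) \<in> \<Omega>)"
  shows "definable_family S k n {t \<in> T. p \<in> B t} (\<lambda>t. {g \<in> topspace \<tau>. \<exists>b\<in>B t. (b, g) \<notin> \<Omega>})"
proof -
  have T: "T \<in> S k" using B unfolding definable_family_def by blast
  have len_p: "length p = n" using structure_length[OF p] by simp
  have "definable_rel S [k, n] (\<lambda>xs. (xs ! 0 \<in> T \<and> xs ! 1 \<in> B (xs ! 0)) \<and> xs ! 1 \<in> {p})"
    by (rule definable_rel_and[OF definable_familyD[OF B] definable_rel_mem[OF p]]) simp_all
  then have "definable_rel S [k] (\<lambda>xs. xs ! 0 \<in> {t \<in> T. p \<in> B t})"
    by (rule definable_rel_exI[where l = n]) (simp_all add: nth_append len_p)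
  then have T': "{t \<in> T. p \<in> B t} \<in> S k"
    by (rule definable_rel_memD) (use structure_length[OF T] in blast)
  have "definable_rel S [k, n, n] (\<lambda>xs. (xs ! 0 \<in> T \<and> xs ! 2 \<in> B (xs ! 0)) \<and> (xs ! 2, xs ! 1) \<notin> \<Omega>)"
    using definable_rel_reindex[OF definable_familyD[OF B], where f = "[0, 2]" and ls' = "[k, n, n]"]
      definable_rel_not[OF definable_rel_reindex[OF \<Omega>, where f = "[2, 1]" and ls' = "[k, n, n]"]]
    by (rule_tac definable_rel_and) simp_all
  then have "definable_rel S [k, n] (\<lambda>xs. \<exists>b. length b = n \<and> (xs ! 0 \<in> T \<and> b \<in> B (xs ! 0)) \<and> (b, xs ! 1) \<notin> \<Omega>)"
    by (rule definable_rel_exI[where l = n]) (simp_all add: nth_append)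
  then have "definable_rel S [k, n] (\<lambda>xs. xs ! 0 \<in> {t \<in> T. p \<in> B t} \<and> xs ! 1 \<in> topspace \<tau> \<and>
      (\<exists>b. length b = n \<and> (xs ! 0 \<in> T \<and> b \<in> B (xs ! 0)) \<and> (b, xs ! 1) \<notin> \<Omega>))"
    using T' topspace_definable by (intro definable_rel_and definable_rel_mem) simp_all
  then have "definable_rel S [k, n] (\<lambda>xs. xs ! 0 \<in> {t \<in> T. p \<in> B t} \<and>
      xs ! 1 \<in> {g \<in> topspace \<tau>. \<exists>b\<in>B (xs ! 0). (b, g) \<notin> \<Omega>})"
    by (rule definable_rel_cong) (auto dest: definable_family_length[OF B])
  then show ?thesis
    by (rule definable_familyI[OF T', where F = "\<lambda>t. {g \<in> topspace \<tau>. \<exists>b\<in>B t. (b, g) \<notin> \<Omega>}"])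
      (simp add: length_topspace)
qed

end

locale definably_compact_space = definable_topological_space +
  assumes definably_compact: "definably_compact S n \<tau>"
begin

lemma definably_compact_closure_of_Inter:
  assumes D: "definable_family S k n T D" and "T \<noteq> {}"
    and D_sub: "\<forall>t\<in>T. D t \<subseteq> topspace \<tau>" and D_ne: "\<forall>t\<in>T. D t \<noteq> {}"
    and filtered: "\<forall>t1\<in>T. \<forall>t2\<in>T. \<exists>t3\<in>T. D t3 \<subseteq> D t1 \<inter> D t2"
  obtains x where "x \<in> topspace \<tau>" "\<forall>t\<in>T. x \<in> \<tau> closure_of D t"
proof -
  have "\<forall>t\<in>T. closedin \<tau> (\<tau> closure_of D t) \<and> \<tau> closure_of D t \<noteq> {}"
    using D_sub D_ne closure_of_subset by fastforce
  moreover have "\<forall>t1\<in>T. \<forall>t2\<in>T. \<exists>t3\<in>T. \<tau> closure_of D t3 \<subseteq> \<tau> closure_of D t1 \<inter> \<tau> closure_of D t2"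
    using filtered closure_of_mono by (meson le_inf_iff)
  ultimately have "(\<Inter>t\<in>T. \<tau> closure_of D t) \<noteq> {}"
    using definably_compact definable_family_closure_of[OF D] unfolding definably_compact_def by blast
  then obtain x where x: "\<forall>t\<in>T. x \<in> \<tau> closure_of D t" by blast
  moreover obtain t where "t \<in> T" using \<open>T \<noteq> {}\<close> by blast
  ultimately have "x \<in> topspace \<tau>" by (simp add: in_closure_of)
  with x show ?thesis using that by blast
qed

lemma definable_tube:
  assumes \<Omega>: "openin (prod_topology \<tau> \<tau>) \<Omega>" and p: "p \<in> topspace \<tau>" "{p} \<in> S n"
    and p_\<Omega>: "{p} \<times> topspace \<tau> \<subseteq> \<Omega>" and definable_\<Omega>: "definable_rel S [n, n] (\<lambda>xs. (xs ! 0, xs ! 1) \<in> \<Omega>)"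
  obtains V where "openin \<tau> V" "p \<in> V" "V \<times> topspace \<tau> \<subseteq> \<Omega>"
proof -
  obtain k T B where B: "definable_family S k n T B" and open_B: "\<forall>t\<in>T. openin \<tau> (B t)"
    and basis: "\<forall>U. openin \<tau> U \<longrightarrow> (\<forall>x\<in>U. \<exists>t\<in>T. x \<in> B t \<and> B t \<subseteq> U)"
    by (rule definable_basis)
  define T' where "T' = {t \<in> T. p \<in> B t}"
  define D where "D t = {g \<in> topspace \<tau>. \<exists>b\<in>B t. (b, g) \<notin> \<Omega>}" for t
  show thesis
  proof (cases "\<exists>t\<in>T'. D t = {}")
    case True
    then obtain t where t: "t \<in> T" "p \<in> B t" and "D t = {}" unfolding T'_def by blast
    then have "B t \<times> topspace \<tau> \<subseteq> \<Omega>" unfolding D_def by blast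
    then show thesis using that open_B t by blast
  next
    case False
    have "T' \<noteq> {}"
      using basis p(1) unfolding T'_def by blast
    moreover have "\<forall>t1\<in>T'. \<forall>t2\<in>T'. \<exists>t3\<in>T'. D t3 \<subseteq> D t1 \<inter> D t2"
    proof (intro ballI)
      fix t1 t2 assume "t1 \<in> T'" "t2 \<in> T'"
      then have "openin \<tau> (B t1 \<inter> B t2)" "p \<in> B t1 \<inter> B t2" using open_B unfolding T'_def by auto
      then obtain t3 where "t3 \<in> T" "p \<in> B t3" "B t3 \<subseteq> B t1 \<inter> B t2" using basis by meson
      then show "\<exists>t3\<in>T'. D t3 \<subseteq> D t1 \<inter> D t2" unfolding T'_def D_def by blast
    qed
    ultimately obtain x where x: "x \<in> topspace \<tau>" "\<forall>t\<in>T'. x \<in> \<tau> closure_of D t"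
      using definably_compact_closure_of_Inter
        [OF definable_family_tube_complement[OF B p(2) definable_\<Omega>, folded T'_def D_def]] False
      unfolding D_def by blast
    have "(p, x) \<in> \<Omega>" using p_\<Omega> x(1) by blast
    then obtain U W where UW: "openin \<tau> U" "openin \<tau> W" "p \<in> U" "x \<in> W" "U \<times> W \<subseteq> \<Omega>"
      using \<Omega> unfolding openin_prod_topology_alt by meson
    then obtain t where t: "t \<in> T" "p \<in> B t" "B t \<subseteq> U" using basis by meson
    then have "x \<in> \<tau> closure_of D t" using x(2) unfolding T'_def by blast
    then obtain y where "y \<in> D t" "y \<in> W" using UW(2,4) unfolding in_closure_of by blast
    then obtain b where "b \<in> B t" "(b, y) \<notin> \<Omega>" unfolding D_def by blast
    then show thesis using UW(5) t(3) \<open>y \<in> W\<close> by blast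
  qed
qed

end

section \<open>Definable topological groups\<close>

locale definable_top_group = first_order_structure S
  for S :: "nat \<Rightarrow> 'm list set set" +
  fixes n :: nat and G :: "'m list set" and mul :: "'m list \<Rightarrow> 'm list \<Rightarrow> 'm list"
    and e :: "'m list" and \<tau> :: "'m list topology"
  assumes definable_topological_group: "definable_topological_group S n G mul e \<tau>"

sublocale definable_top_group \<subseteq> group "grp G mul e"
  using definable_topological_group
  unfolding definable_topological_group_def definable_group_def by blast

context definable_top_group
begin

lemma topspace_eq: "topspace \<tau> = G"
  using definable_topological_group
  unfolding definable_topological_group_def definable_topology_def by blast

sublocale definable_topological_space S n \<tau>
  using definable_topological_group
  by unfold_locales (simp add: definable_topological_group_def topspace_eq)

abbreviation ginv :: "'m list \<Rightarrow> 'm list" where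
  "ginv x \<equiv> inv\<^bsub>grp G mul e\<^esub> x"

lemma
  shows mul_closed [simp]: "x \<in> G \<Longrightarrow> y \<in> G \<Longrightarrow> mul x y \<in> G"
    and one_mem [simp]: "e \<in> G"
    and ginv_closed [simp]: "x \<in> G \<Longrightarrow> ginv x \<in> G"
    and mul_assoc: "x \<in> G \<Longrightarrow> y \<in> G \<Longrightarrow> z \<in> G \<Longrightarrow> mul (mul x y) z = mul x (mul y z)"
    and mul_one_left [simp]: "x \<in> G \<Longrightarrow> mul e x = x"
    and mul_one_right [simp]: "x \<in> G \<Longrightarrow> mul x e = x"
    and mul_ginv_left [simp]: "x \<in> G \<Longrightarrow> mul (ginv x) x = e"
    and mul_ginv_right [simp]: "x \<in> G \<Longrightarrow> mul x (ginv x) = e"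
  using m_closed[of x y] one_closed inv_closed[of x] m_assoc[of x y z] l_one[of x] r_one[of x]
    l_inv[of x] r_inv[of x]
  by simp_all

lemma mul_left_cancel: "x \<in> G \<Longrightarrow> y \<in> G \<Longrightarrow> z \<in> G \<Longrightarrow> mul x y = mul x z \<longleftrightarrow> y = z"
  using Units_l_cancel[of x y z] Units_eq by simp

lemma mul_self_eq_iff [simp]: "x \<in> G \<Longrightarrow> x = mul x x \<longleftrightarrow> x = e"
  using l_cancel_one'[of x x] by simp

lemma mul_ginv_cancel_left [simp]: "x \<in> G \<Longrightarrow> y \<in> G \<Longrightarrow> mul x (mul (ginv x) y) = y"
  by (simp flip: mul_assoc)

lemma length_carrier: "x \<in> G \<Longrightarrow> length x = n"
  using length_topspace topspace_eq by blast

lemma ginv_mul [simp]: "x \<in> G \<Longrightarrow> y \<in> G \<Longrightarrow> ginv (mul x y) = mul (ginv y) (ginv x)"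
  using inv_mult_group[of x y] by simp

lemma ginv_ginv [simp]: "x \<in> G \<Longrightarrow> ginv (ginv x) = x"
  using inv_inv[of x] by simp

lemma ginv_one [simp]: "ginv e = e"
  using inv_one by simp

definition conjugate :: "'m list \<Rightarrow> 'm list \<Rightarrow> 'm list" where
  "conjugate x g = mul (mul (ginv g) x) g"

lemma conjugate_closed [simp]: "x \<in> G \<Longrightarrow> g \<in> G \<Longrightarrow> conjugate x g \<in> G"
  by (simp add: conjugate_def)

lemma mul_conjugate [simp]: "x \<in> G \<Longrightarrow> g \<in> G \<Longrightarrow> mul g (conjugate x g) = mul x g"
  by (simp add: conjugate_def mul_assoc)

lemma conjugate_eq_iff:
  assumes "x \<in> G" "g \<in> G" "c \<in> G"
  shows "c = conjugate x g \<longleftrightarrow> mul g c = mul x g"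
  using assms mul_left_cancel[of g c "conjugate x g"] by auto

lemma conjugate_one [simp]: "g \<in> G \<Longrightarrow> conjugate e g = e"
  by (simp add: conjugate_def)

lemma conjugate_by_one [simp]: "x \<in> G \<Longrightarrow> conjugate x e = x"
  by (simp add: conjugate_def)

lemma conjugate_ginv: "x \<in> G \<Longrightarrow> g \<in> G \<Longrightarrow> conjugate (ginv x) g = ginv (conjugate x g)"
  by (simp add: conjugate_def mul_assoc)

lemma conjugate_mul:
  "x \<in> G \<Longrightarrow> y \<in> G \<Longrightarrow> g \<in> G \<Longrightarrow> conjugate (mul x y) g = mul (conjugate x g) (conjugate y g)"
  by (simp add: conjugate_def mul_assoc)

lemma conjugate_conjugate:
  "x \<in> G \<Longrightarrow> h \<in> G \<Longrightarrow> g \<in> G \<Longrightarrow> conjugate (conjugate h (ginv x)) g = conjugate h (mul (ginv x) g)"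
  by (simp add: conjugate_def mul_assoc)

lemma definable_mul_graph:
  "definable_rel S [n, n, n] (\<lambda>xs. xs ! 0 \<in> G \<and> xs ! 1 \<in> G \<and> xs ! 2 = mul (xs ! 0) (xs ! 1))"
proof -
  have graph: "{x @ y @ mul x y | x y. x \<in> G \<and> y \<in> G} \<in> S (n + n + n)"
    using definable_topological_group
    unfolding definable_topological_group_def definable_group_def by blast
  have "definable_rel S [n, n, n] (\<lambda>xs. concat xs \<in> {x @ y @ mul x y | x y. x \<in> G \<and> y \<in> G})"
    by (rule definable_rel_concat_mem) (use graph in \<open>simp add: add.assoc\<close>)
  then show ?thesis
  proof (rule definable_rel_cong)
    fix xs :: "'m list list" assume "map length xs = [n, n, n]"
    then obtain x y z where xs: "xs = [x, y, z]" "length x = n" "length y = n"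
      by (auto simp: map_eq_Cons_conv)
    have "x @ y @ z \<in> {x @ y @ mul x y | x y. x \<in> G \<and> y \<in> G} \<longleftrightarrow> x \<in> G \<and> y \<in> G \<and> z = mul x y"
    proof
      assume "x @ y @ z \<in> {x @ y @ mul x y | x y. x \<in> G \<and> y \<in> G}"
      then obtain x' y' where xy': "x @ y @ z = x' @ y' @ mul x' y'" "x' \<in> G" "y' \<in> G" by blast
      then have "x = x' \<and> y @ z = y' @ mul x' y'" using xs(2) length_carrier append_eq_append_conv by metis
      then have "x = x' \<and> y = y' \<and> z = mul x' y'" using xs(3) xy'(3) length_carrier append_eq_append_conv by metis
      then show "x \<in> G \<and> y \<in> G \<and> z = mul x y" using xy' by simp
    qed blast
    then show "concat xs \<in> {x @ y @ mul x y | x y. x \<in> G \<and> y \<in> G} \<longleftrightarrow>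
        xs ! 0 \<in> G \<and> xs ! 1 \<in> G \<and> xs ! 2 = mul (xs ! 0) (xs ! 1)"
      using xs(1) by simp
  qed
qed

lemma definable_one: "{e} \<in> S n"
proof (rule definable_rel_memD)
  have "definable_rel S [n] (\<lambda>xs. xs ! 0 \<in> G \<and> xs ! 0 \<in> G \<and> xs ! 0 = mul (xs ! 0) (xs ! 0))"
    using definable_rel_reindex[OF definable_mul_graph, where f = "[0, 0, 0]" and ls' = "[n]"] by simp
  then show "definable_rel S [n] (\<lambda>xs. xs ! 0 \<in> {e})"
    by (rule definable_rel_cong) (auto simp: length_Suc_conv)
qed (simp add: length_carrier)

lemma definable_conjugate_graph:
  "definable_rel S [n, n, n] (\<lambda>xs. xs ! 0 \<in> G \<and> xs ! 1 \<in> G \<and> xs ! 2 = conjugate (xs ! 0) (xs ! 1))"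
proof -
  \<comment> \<open>\<open>c = g\<inverse> x g\<close> iff \<open>g c = x g\<close>; the common product is the quantified variable\<close>
  let ?ls = "[n, n, n, n]"
  have "definable_rel S ?ls (\<lambda>xs. (xs ! 1 \<in> G \<and> xs ! 2 \<in> G \<and> xs ! 3 = mul (xs ! 1) (xs ! 2)) \<and>
      (xs ! 0 \<in> G \<and> xs ! 1 \<in> G \<and> xs ! 3 = mul (xs ! 0) (xs ! 1)))"
    using definable_rel_reindex[OF definable_mul_graph, where f = "[1, 2, 3]" and ls' = ?ls]
      definable_rel_reindex[OF definable_mul_graph, where f = "[0, 1, 3]" and ls' = ?ls]
    by (rule_tac definable_rel_and) simp_all
  then show ?thesis
    by (rule definable_rel_exI[where l = n])
      (auto simp: length_Suc_conv numeral_3_eq_3 conjugate_eq_iff length_carrier)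
qed

lemma continuous_map_mul:
  assumes "continuous_map X \<tau> f" "continuous_map X \<tau> g"
  shows "continuous_map X \<tau> (\<lambda>x. mul (f x) (g x))"
proof -
  have "continuous_map (prod_topology \<tau> \<tau>) \<tau> (\<lambda>(x, y). mul x y)"
    using definable_topological_group unfolding definable_topological_group_def by blast
  from continuous_map_compose[OF continuous_map_pairedI[OF assms] this] show ?thesis
    by (simp add: comp_def)
qed

lemma continuous_map_ginv:
  assumes "continuous_map X \<tau> f"
  shows "continuous_map X \<tau> (\<lambda>x. ginv (f x))"
proof -
  have "continuous_map \<tau> \<tau> ginv"
    using definable_topological_group unfolding definable_topological_group_def by blast
  then show ?thesis
    using continuous_map_compose[OF assms] by (simp add: comp_def)
qed

lemma continuous_map_left_translation: "a \<in> G \<Longrightarrow> continuous_map \<tau> \<tau> (mul a)"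
  using continuous_map_mul[OF continuous_map_const[THEN iffD2] continuous_map_id]
  by (simp add: topspace_eq)

lemma openin_subgroupI:
  assumes H: "subgroup H (grp G mul e)" and V: "openin \<tau> V" "e \<in> V" "V \<subseteq> H"
  shows "openin \<tau> H"
proof (subst openin_subopen, intro ballI)
  fix h assume h: "h \<in> H"
  then have hG: "h \<in> G" using subgroup.subset[OF H] by auto
  let ?U = "{y \<in> topspace \<tau>. mul (ginv h) y \<in> V}"
  have "openin \<tau> ?U"
    using openin_continuous_map_preimage[OF continuous_map_left_translation V(1)] hG by simp
  moreover have "h \<in> ?U" using hG V(2) by (simp add: topspace_eq)
  moreover have "?U \<subseteq> H"
  proof
    fix y assume y: "y \<in> ?U"
    then have "mul (ginv h) y \<in> H" using V(3) by blast
    then have "mul h (mul (ginv h) y) \<in> H"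
      using subgroup.m_closed[OF H h] by simp
    then show "y \<in> H" using hG y by (simp add: topspace_eq)
  qed
  ultimately show "\<exists>U. openin \<tau> U \<and> h \<in> U \<and> U \<subseteq> H" by blast
qed

lemma discrete_if_openin_one:
  assumes "openin \<tau> {e}"
  shows "\<tau> = discrete_topology G"
proof -
  have "openin \<tau> {x}" if x: "x \<in> G" for x
  proof -
    have "mul (ginv x) y = e \<longleftrightarrow> y = x" if "y \<in> G" for y
      using mul_left_cancel[of "ginv x" y x] x that by simp
    then have "{y \<in> topspace \<tau>. mul (ginv x) y \<in> {e}} = {x}"
      using x by (auto simp: topspace_eq)
    moreover have "openin \<tau> {y \<in> topspace \<tau>. mul (ginv x) y \<in> {e}}"
      using openin_continuous_map_preimage[OF continuous_map_left_translation[of "ginv x"] assms] x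
      by simp
    ultimately show ?thesis by simp
  qed
  then have "discrete_topology G = \<tau>"
    unfolding discrete_topology_unique using topspace_eq by blast
  then show ?thesis by (rule sym)
qed


lemma definable_rel_mul_mem_iff:
  assumes "A \<in> S n"
  shows "definable_rel S [n, n] (\<lambda>xs. xs ! 0 \<in> G \<and> xs ! 1 \<in> G \<and> (mul (xs ! 0) (xs ! 1) \<in> A \<longleftrightarrow> xs ! 1 \<in> A))"
proof -
  have "definable_rel S [n, n, n] (\<lambda>xs. xs ! 2 \<in> A \<longleftrightarrow> xs ! 1 \<in> A)"
    using assms by (intro definable_rel_iff definable_rel_mem) simp_all
  from definable_rel_apply_op[OF definable_mul_graph _ this] show ?thesis
    by (simp add: length_carrier)
qed

lemma definable_rel_conjugate_mem:
  assumes "H \<in> S n"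
  shows "definable_rel S [n, n] (\<lambda>xs. xs ! 0 \<in> G \<and> xs ! 1 \<in> G \<and> conjugate (xs ! 0) (xs ! 1) \<in> H)"
proof -
  have "definable_rel S [n, n, n] (\<lambda>xs. xs ! 2 \<in> H)"
    using assms by (intro definable_rel_mem) simp_all
  from definable_rel_apply_op[OF definable_conjugate_graph _ this] show ?thesis
    by (simp add: length_carrier)
qed

definition stabiliser :: "'m list set \<Rightarrow> 'm list set" where
  "stabiliser A = {h \<in> G. \<forall>u\<in>G. mul h u \<in> A \<longleftrightarrow> u \<in> A}"

lemma subgroup_stabiliser: "subgroup (stabiliser A) (grp G mul e)"
proof (rule subgroupI)
  show "stabiliser A \<subseteq> carrier (grp G mul e)" unfolding stabiliser_def by auto
  have "e \<in> stabiliser A" unfolding stabiliser_def by simp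
  then show "stabiliser A \<noteq> {}" by blast
next
  fix h assume "h \<in> stabiliser A"
  then have h: "h \<in> G" "\<And>u. u \<in> G \<Longrightarrow> mul h u \<in> A \<longleftrightarrow> u \<in> A"
    unfolding stabiliser_def by auto
  have "mul (ginv h) u \<in> A \<longleftrightarrow> u \<in> A" if "u \<in> G" for u
    using h(2)[of "mul (ginv h) u"] h(1) that by simp
  then show "ginv h \<in> stabiliser A" unfolding stabiliser_def using h(1) by simp
next
  fix h1 h2 assume "h1 \<in> stabiliser A" "h2 \<in> stabiliser A"
  then show "h1 \<otimes>\<^bsub>grp G mul e\<^esub> h2 \<in> stabiliser A"
    unfolding stabiliser_def by (simp add: mul_assoc)
qed

lemma stabiliser_eq_carrierD:
  assumes "A \<subseteq> G" "a \<in> A" "stabiliser A = G"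
  shows "A = G"
proof
  show "G \<subseteq> A"
  proof
    fix y assume y: "y \<in> G"
    have "a \<in> G" using assms by blast
    then have "mul y (ginv a) \<in> stabiliser A" using assms(3) y by simp
    then have "mul (mul y (ginv a)) a \<in> A \<longleftrightarrow> a \<in> A"
      using \<open>a \<in> G\<close> unfolding stabiliser_def by blast
    then have "mul (mul y (ginv a)) a \<in> A" using assms(2) by blast
    then show "y \<in> A" using y \<open>a \<in> G\<close> by (simp add: mul_assoc)
  qed
qed (rule assms(1))

lemma definable_stabiliser:
  assumes "A \<in> S n" shows "stabiliser A \<in> S n"
proof -
  have "{x \<in> G. \<forall>y\<in>G. x \<in> G \<and> y \<in> G \<and> (mul x y \<in> A \<longleftrightarrow> y \<in> A)} \<in> S n"
    by (rule definable_Collect_Ball[OF definable_rel_mul_mem_iff[OF assms]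
          topspace_definable[unfolded topspace_eq]])
  also have "{x \<in> G. \<forall>y\<in>G. x \<in> G \<and> y \<in> G \<and> (mul x y \<in> A \<longleftrightarrow> y \<in> A)} = stabiliser A"
    unfolding stabiliser_def by blast
  finally show ?thesis .
qed

definition normal_core :: "'m list set \<Rightarrow> 'm list set" where
  "normal_core H = {x \<in> G. \<forall>g\<in>G. conjugate x g \<in> H}"

lemma normal_core_subset: "normal_core H \<subseteq> H"
proof
  fix x assume "x \<in> normal_core H"
  then have "x \<in> G" "conjugate x e \<in> H" unfolding normal_core_def using one_mem by blast+
  then show "x \<in> H" by simp
qed

lemma normal_normal_core:
  assumes H: "subgroup H (grp G mul e)"
  shows "normal (normal_core H) (grp G mul e)"
  unfolding normal_inv_iff
proof (intro conjI ballI)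
  show "subgroup (normal_core H) (grp G mul e)"
  proof (rule subgroupI)
    show "normal_core H \<subseteq> carrier (grp G mul e)" unfolding normal_core_def by auto
    have "e \<in> normal_core H" using subgroup.one_closed[OF H] unfolding normal_core_def by simp
    then show "normal_core H \<noteq> {}" by blast
  next
    fix x assume "x \<in> normal_core H"
    then show "ginv x \<in> normal_core H"
      using subgroup.m_inv_closed[OF H] unfolding normal_core_def by (simp add: conjugate_ginv)
  next
    fix x y assume "x \<in> normal_core H" "y \<in> normal_core H"
    then show "x \<otimes>\<^bsub>grp G mul e\<^esub> y \<in> normal_core H"
      using subgroup.m_closed[OF H] unfolding normal_core_def by (simp add: conjugate_mul)
  qed
next
  fix x h assume "x \<in> carrier (grp G mul e)" "h \<in> normal_core H"
  moreover have "mul (mul x h) (ginv x) = conjugate h (ginv x)" if "x \<in> G" "h \<in> G"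
    using that by (simp add: conjugate_def)
  ultimately show "x \<otimes>\<^bsub>grp G mul e\<^esub> h \<otimes>\<^bsub>grp G mul e\<^esub> ginv x \<in> normal_core H"
    unfolding normal_core_def by (simp add: conjugate_conjugate)
qed

lemma definable_normal_core:
  assumes "H \<in> S n" shows "normal_core H \<in> S n"
proof -
  have "{x \<in> G. \<forall>y\<in>G. x \<in> G \<and> y \<in> G \<and> conjugate x y \<in> H} \<in> S n"
    by (rule definable_Collect_Ball[OF definable_rel_conjugate_mem[OF assms]
          topspace_definable[unfolded topspace_eq]])
  also have "{x \<in> G. \<forall>y\<in>G. x \<in> G \<and> y \<in> G \<and> conjugate x y \<in> H} = normal_core H"
    unfolding normal_core_def by blast
  finally show ?thesis .
qed

end

locale definably_compact_group = definable_top_group +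
  assumes definably_compact: "definably_compact S n \<tau>"

sublocale definably_compact_group \<subseteq> definably_compact_space S n \<tau>
  by unfold_locales (rule definably_compact)

context definably_compact_group
begin

lemma openin_subgroup_tubeI:
  assumes K: "subgroup K (grp G mul e)" and \<Omega>: "openin (prod_topology \<tau> \<tau>) \<Omega>" "{e} \<times> G \<subseteq> \<Omega>"
    and definable_\<Omega>: "definable_rel S [n, n] (\<lambda>xs. (xs ! 0, xs ! 1) \<in> \<Omega>)"
    and \<Omega>_K: "\<And>x. x \<in> G \<Longrightarrow> \<forall>g\<in>G. (x, g) \<in> \<Omega> \<Longrightarrow> x \<in> K"
  shows "openin \<tau> K"
proof -
  obtain V where V: "openin \<tau> V" "e \<in> V" "V \<times> topspace \<tau> \<subseteq> \<Omega>"
    using definable_tube[OF \<Omega>(1) _ definable_one _ definable_\<Omega>] \<Omega>(2) by (auto simp: topspace_eq)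
  moreover have "V \<subseteq> K"
  proof
    fix x assume "x \<in> V"
    then have "x \<in> G" "\<forall>g\<in>G. (x, g) \<in> \<Omega>"
      using V(3) openin_subset[OF V(1)] by (auto simp: topspace_eq)
    then show "x \<in> K" by (rule \<Omega>_K)
  qed
  ultimately show ?thesis by (intro openin_subgroupI[OF K])
qed

lemma openin_stabiliser:
  assumes "A \<in> S n" "openin \<tau> A" "closedin \<tau> A"
  shows "openin \<tau> (stabiliser A)"
proof (rule openin_subgroup_tubeI[OF subgroup_stabiliser])
  let ?\<Omega> = "{p \<in> topspace (prod_topology \<tau> \<tau>). mul (fst p) (snd p) \<in> A \<longleftrightarrow> snd p \<in> A}"
  show "openin (prod_topology \<tau> \<tau>) ?\<Omega>"
    by (rule openin_eq_clopen_preimage[OF _ continuous_map_snd assms(2,3)])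
      (intro continuous_map_mul continuous_map_fst continuous_map_snd)
  show "{e} \<times> G \<subseteq> ?\<Omega>" by (auto simp: topspace_eq)
  show "definable_rel S [n, n] (\<lambda>xs. (xs ! 0, xs ! 1) \<in> ?\<Omega>)"
    using definable_rel_mul_mem_iff[OF assms(1)] by (simp add: topspace_eq)
  show "x \<in> stabiliser A" if "x \<in> G" "\<forall>g\<in>G. (x, g) \<in> ?\<Omega>" for x
    using that unfolding stabiliser_def by simp
qed

lemma openin_normal_core:
  assumes "H \<in> S n" "openin \<tau> H" "subgroup H (grp G mul e)"
  shows "openin \<tau> (normal_core H)"
proof (rule openin_subgroup_tubeI[OF normal_imp_subgroup[OF normal_normal_core[OF assms(3)]]])
  let ?\<Omega> = "{p \<in> topspace (prod_topology \<tau> \<tau>). conjugate (fst p) (snd p) \<in> H}"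
  have "continuous_map (prod_topology \<tau> \<tau>) \<tau> (\<lambda>p. conjugate (fst p) (snd p))"
    unfolding conjugate_def
    by (intro continuous_map_mul continuous_map_ginv continuous_map_fst continuous_map_snd)
  then show "openin (prod_topology \<tau> \<tau>) ?\<Omega>"
    using assms(2) by (rule openin_continuous_map_preimage)
  show "{e} \<times> G \<subseteq> ?\<Omega>" using subgroup.one_closed[OF assms(3)] by (auto simp: topspace_eq)
  show "definable_rel S [n, n] (\<lambda>xs. (xs ! 0, xs ! 1) \<in> ?\<Omega>)"
    using definable_rel_conjugate_mem[OF assms(1)] by (simp add: topspace_eq)
  show "x \<in> normal_core H" if "x \<in> G" "\<forall>g\<in>G. (x, g) \<in> ?\<Omega>" for x
    using that unfolding normal_core_def by simp
qed

lemma discrete_if_definable_clopen: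
  assumes simple: "definably_simple S n G mul e"
    and A: "A \<in> S n" "openin \<tau> A" "closedin \<tau> A" "A \<noteq> {}" "A \<noteq> G"
  shows "\<tau> = discrete_topology G"
proof -
  let ?H = "stabiliser A"
  let ?K = "normal_core ?H"
  have "?H \<noteq> G"
    using stabiliser_eq_carrierD A openin_subset[OF A(2)] by (auto simp: topspace_eq)
  then have "?K \<noteq> G" using normal_core_subset[of ?H] stabiliser_def by blast
  moreover have "normal ?K (grp G mul e)" "?K \<in> S n"
    using normal_normal_core[OF subgroup_stabiliser] definable_normal_core[OF definable_stabiliser[OF A(1)]]
    by blast+
  ultimately have "?K = {e}" using simple unfolding definably_simple_def by blast
  moreover have "openin \<tau> ?K"
    using openin_normal_core[OF definable_stabiliser openin_stabiliser subgroup_stabiliser] A(1-3) by blast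
  ultimately show ?thesis by (intro discrete_if_openin_one) simp
qed

end

theorem theorem5p4:
  fixes S :: "nat \<Rightarrow> ('m::{group_add, dense_linorder, no_top, no_bot}) list set set"
    and n :: nat and G :: "'m list set" and mul :: "'m list \<Rightarrow> 'm list \<Rightarrow> 'm list"
    and e :: "'m list" and \<tau> :: "'m list topology"
  assumes ordered_group: "\<forall>a b c :: 'm. a < b \<longrightarrow> c + a < c + b \<and> a + c < b + c"
    and expansion: "expansion_of_ordered_group S"
    and def_complete: "definably_complete S"
    and loc_o_min: "locally_o_minimal S"
    and top_group: "definable_topological_group S n G mul e \<tau>"
    and simple: "definably_simple S n G mul e"
    and regular: "regular_space \<tau>"
    and hausdorff: "Hausdorff_space \<tau>"
    and compact: "definably_compact S n \<tau>"
  shows "\<tau> = discrete_topology G \<or> definably_connected S n \<tau>"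
proof -
  interpret definably_compact_group S n G mul e \<tau>
    using expansion top_group compact unfolding expansion_of_ordered_group_def
    by unfold_locales simp_all
  show ?thesis
  proof (rule disjCI)
    assume "\<not> definably_connected S n \<tau>"
    then obtain A where "A \<in> S n" "openin \<tau> A" "closedin \<tau> A" "A \<noteq> {}" "A \<noteq> G"
      unfolding definably_connected_def topspace_eq by blast
    then show "\<tau> = discrete_topology G" by (rule discrete_if_definable_clopen[OF simple])
  qed
qed

end
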